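(* For $s\in(0,1]$, $U\,\mathrm{ran}\,P_s^-=\Phi_sH^2$ and $U\,\mathrm{ran}\,P_s^+=(\Phi_sH^2)^\perp$, the orthogonal complement taken in $H^2$.
   Context: $H^2$ is the Hardy space of the unit disc $\mathbb{D}$, $k_\alpha(z)=\frac{1}{1-\bar\alpha z}$. The Sarason transform $U$ is the unique unitary operator from $L^2([0,1])$ onto $H^2$ with $U(x^n)=\frac{1}{n+1}k_{\frac{n}{n+1}}$ for integers $n\ge0$. For $s\in[0,1]$, $P_s^-f=\chi_{[0,s]}f$ and $P_s^+f=\chi_{[s,1]}f$ are orthogonal projections on $L^2([0,1])$. For $s\in(0,1]$, $\Phi_s(z)=e^{\frac12\ln s\,\frac{1+z}{1-z}}$, a singular inner function. *)

theory Defs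
  imports "HOL-Analysis.Analysis"
begin

text \<open>Functions are represented as maps
complex => complex that are holomorphic on the open unit disc and, as a
normalisation, vanish outside it.\<close>

definition h2_coeff :: "(complex \<Rightarrow> complex) \<Rightarrow> nat \<Rightarrow> complex" where
  "h2_coeff f n = (deriv ^^ n) f 0 / of_nat (fact n)"

definition H2 :: "(complex \<Rightarrow> complex) set" where
  "H2 = {f. f holomorphic_on ball 0 1 \<and> (\<forall>z. z \<notin> ball 0 1 \<longrightarrow> f z = 0)
            \<and> summable (\<lambda>n. (norm (h2_coeff f n))\<^sup>2)}"

definition h2_inner :: "(complex \<Rightarrow> complex) \<Rightarrow> (complex \<Rightarrow> complex) \<Rightarrow> complex" where
  "h2_inner f g = (\<Sum>n. h2_coeff f n * cnj (h2_coeff g n))"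

definition h2_norm :: "(complex \<Rightarrow> complex) \<Rightarrow> real" where
  "h2_norm f = sqrt (\<Sum>n. (norm (h2_coeff f n))\<^sup>2)"

definition kernel :: "complex \<Rightarrow> complex \<Rightarrow> complex" where
  "kernel \<alpha> z = (if z \<in> ball 0 1 then 1 / (1 - cnj \<alpha> * z) else 0)"

definition L2 :: "(real \<Rightarrow> complex) set" where
  "L2 = {f. f \<in> borel_measurable borel \<and> set_integrable lborel {0..1} (\<lambda>x. (norm (f x))\<^sup>2)}"

definition l2_norm :: "(real \<Rightarrow> complex) \<Rightarrow> real" where
  "l2_norm f = sqrt (LINT x:{0..1}|lborel. (norm (f x))\<^sup>2)"

definition Pminus :: "real \<Rightarrow> (real \<Rightarrow> complex) \<Rightarrow> (real \<Rightarrow> complex)" where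
  "Pminus s f = (\<lambda>x. indicator {0..s} x * f x)"

definition Pplus :: "real \<Rightarrow> (real \<Rightarrow> complex) \<Rightarrow> (real \<Rightarrow> complex)" where
  "Pplus s f = (\<lambda>x. indicator {s..1} x * f x)"

definition Phi :: "real \<Rightarrow> complex \<Rightarrow> complex" where
  "Phi s z = exp (complex_of_real (ln s / 2) * ((1 + z) / (1 - z)))"

definition sarason_transform :: "((real \<Rightarrow> complex) \<Rightarrow> (complex \<Rightarrow> complex)) \<Rightarrow> bool" where
  "sarason_transform U \<longleftrightarrow>
     (\<forall>f\<in>L2. \<forall>g\<in>L2. U (\<lambda>x. f x + g x) = (\<lambda>z. U f z + U g z)) \<and>
     (\<forall>f\<in>L2. \<forall>c. U (\<lambda>x. c * f x) = (\<lambda>z. c * U f z)) \<and>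
     (\<forall>f\<in>L2. h2_norm (U f) = l2_norm f) \<and>
     U ` L2 = H2 \<and>
     (\<forall>n::nat. U (\<lambda>x. (complex_of_real x) ^ n)
        = (\<lambda>z. (1 / of_nat (n + 1)) * kernel (of_real (real n / real (n + 1))) z))"

end

(* Evaluation of U f at a real point alpha = gamma / (gamma + 1) of the disc is the H2 inner
   product with the kernel k_alpha, hence the L2 pairing of f with U^-1 k_alpha.  Computing the
   moments of U^-1 k_alpha from U(x^n) = k_(n/(n+1)) / (n+1) and using that moments determine an
   integrable function on [0,1] (Weierstrass approximation) identifies it with (gamma + 1) x^gamma.
   Compressing f into [0,s], (W_s f)(x) = s^(-1/2) f(x/s), multiplies that pairing by
   s^(gamma + 1/2) = Phi_s(alpha); so U W_s = Phi_s U on (0,1), hence on the disc by the identity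
   theorem.  As W_s maps L2 onto ran P_s^-, this is the first claim; the second follows since U
   preserves inner products and ran P_s^+ is the orthogonal complement of ran P_s^-. *)

theory Submission
  imports Defs "HOL-Complex_Analysis.Complex_Analysis"
begin

lemma polarization_identity:
  fixes a b :: complex
  shows "a * cnj b = (\<Sum>k<4. \<i> ^ k * (norm (a + \<i> ^ k * b))\<^sup>2) / 4"
proof -
  have "(\<Sum>k<4. \<i> ^ k * (norm (a + \<i> ^ k * b))\<^sup>2) =
        (norm (a + b))\<^sup>2 + \<i> * (norm (a + \<i> * b))\<^sup>2 - (norm (a - b))\<^sup>2 - \<i> * (norm (a - \<i> * b))\<^sup>2"
    by (simp add: eval_nat_numeral)
  also have "\<dots> = 4 * (a * cnj b)"
    unfolding cmod_power2 by (simp add: complex_eq_iff power2_eq_square algebra_simps)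
  finally show ?thesis
    by simp
qed

lemma norm_lincomb_square_le:
  fixes a b c :: complex
  shows "(norm (a + c * b))\<^sup>2 \<le> 2 * (norm a)\<^sup>2 + 2 * (norm c)\<^sup>2 * (norm b)\<^sup>2"
proof -
  have "norm (a + c * b) \<le> norm a + norm c * norm b"
    by (metis norm_mult norm_triangle_ineq)
  then have "(norm (a + c * b))\<^sup>2 \<le> (norm a + norm c * norm b)\<^sup>2"
    by (simp add: power_mono)
  also have "\<dots> \<le> 2 * (norm a)\<^sup>2 + 2 * (norm c * norm b)\<^sup>2"
    using zero_le_power2[of "norm a - norm c * norm b"] unfolding power2_sum power2_diff
    by linarith
  finally show ?thesis
    by (simp add: power_mult_distrib)
qed

lemma set_integral_sum:
  fixes f :: "'i \<Rightarrow> 'a \<Rightarrow> 'b::{banach, second_countable_topology}"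
  assumes "\<And>i. i \<in> I \<Longrightarrow> set_integrable M A (f i)"
  shows "(LINT x:A|M. (\<Sum>i\<in>I. f i x)) = (\<Sum>i\<in>I. LINT x:A|M. f i x)"
  using assms unfolding set_lebesgue_integral_def set_integrable_def scaleR_sum_right
  by (intro Bochner_Integration.integral_sum) simp

section \<open>The Hardy space\<close>

lemma H2_holomorphic: "f \<in> H2 \<Longrightarrow> f holomorphic_on ball 0 1"
  and H2_outside: "f \<in> H2 \<Longrightarrow> z \<notin> ball 0 1 \<Longrightarrow> f z = 0"
  and H2_summable_coeff: "f \<in> H2 \<Longrightarrow> summable (\<lambda>n. (norm (h2_coeff f n))\<^sup>2)"
  by (simp_all add: H2_def)

lemma h2_coeff_lincomb:
  assumes "f holomorphic_on ball 0 1" "g holomorphic_on ball 0 1"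
  shows "h2_coeff (\<lambda>z. f z + c * g z) n = h2_coeff f n + c * h2_coeff g n"
proof -
  have "(deriv ^^ n) (\<lambda>z. f z + c * g z) 0 = (deriv ^^ n) f 0 + (deriv ^^ n) (\<lambda>z. c * g z) 0"
    by (rule higher_deriv_add) (auto intro!: holomorphic_intros assms)
  also have "(deriv ^^ n) (\<lambda>z. c * g z) 0 = c * (deriv ^^ n) g 0"
    by (rule higher_deriv_cmult[OF assms(2)]) auto
  finally show ?thesis
    by (simp add: h2_coeff_def add_divide_distrib)
qed

lemma H2_lincomb:
  assumes f: "f \<in> H2" and g: "g \<in> H2"
  shows "(\<lambda>z. f z + c * g z) \<in> H2"
  unfolding H2_def
proof (intro CollectI conjI allI impI)
  show "(\<lambda>z. f z + c * g z) holomorphic_on ball 0 1"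
    using H2_holomorphic[OF f] H2_holomorphic[OF g] by (auto intro!: holomorphic_intros)
  show "f z + c * g z = 0" if "z \<notin> ball 0 1" for z
    using f g that by (simp add: H2_outside)
  have "summable (\<lambda>n. 2 * (norm (h2_coeff f n))\<^sup>2 + 2 * (norm c)\<^sup>2 * (norm (h2_coeff g n))\<^sup>2)"
    using f g by (intro summable_add summable_mult H2_summable_coeff)
  then show "summable (\<lambda>n. (norm (h2_coeff (\<lambda>z. f z + c * g z) n))\<^sup>2)"
    unfolding h2_coeff_lincomb[OF H2_holomorphic[OF f] H2_holomorphic[OF g]]
    by (rule summable_comparison_test') (simp add: norm_lincomb_square_le)
qed

lemma H2_sums: "f \<in> H2 \<Longrightarrow> z \<in> ball 0 1 \<Longrightarrow> (\<lambda>n. h2_coeff f n * z ^ n) sums f z"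
  using holomorphic_power_series[OF H2_holomorphic] by (simp add: h2_coeff_def)

lemma h2_norm_square: "f \<in> H2 \<Longrightarrow> (h2_norm f)\<^sup>2 = (\<Sum>n. (norm (h2_coeff f n))\<^sup>2)"
  unfolding h2_norm_def by (simp add: suminf_nonneg H2_summable_coeff)

lemma h2_norm_eq_0_imp_zero:
  assumes f: "f \<in> H2" and "h2_norm f = 0"
  shows "f = (\<lambda>z. 0)"
proof
  fix z
  have "(\<Sum>n. (norm (h2_coeff f n))\<^sup>2) = 0"
    using assms h2_norm_square by force
  then have coeff: "h2_coeff f n = 0" for n
    using suminf_eq_zero_iff[OF H2_summable_coeff[OF f]] by auto
  show "f z = 0"
  proof (cases "z \<in> ball 0 1")
    case True
    then show ?thesis
      using H2_sums[OF f True] sums_zero by (simp add: coeff sums_unique2)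
  next
    case False
    then show ?thesis
      using f by (simp add: H2_outside)
  qed
qed

lemma h2_inner_polarization:
  assumes f: "f \<in> H2" and g: "g \<in> H2"
  shows "h2_inner f g = (\<Sum>k<4. \<i> ^ k * (h2_norm (\<lambda>z. f z + \<i> ^ k * g z))\<^sup>2) / 4"
proof -
  have coeff: "h2_coeff (\<lambda>z. f z + c * g z) n = h2_coeff f n + c * h2_coeff g n" for c n
    using f g by (intro h2_coeff_lincomb H2_holomorphic)
  have "(\<lambda>n. (norm (h2_coeff f n + c * h2_coeff g n))\<^sup>2) sums (h2_norm (\<lambda>z. f z + c * g z))\<^sup>2" for c
    using H2_summable_coeff[OF H2_lincomb[OF f g]] h2_norm_square[OF H2_lincomb[OF f g]]
    by (simp add: coeff summable_sums)
  then have "(\<lambda>n. (\<Sum>k<4. \<i> ^ k * (norm (h2_coeff f n + \<i> ^ k * h2_coeff g n))\<^sup>2) / 4) sums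
      ((\<Sum>k<4. \<i> ^ k * (h2_norm (\<lambda>z. f z + \<i> ^ k * g z))\<^sup>2) / 4)"
    by (intro sums_divide sums_sum sums_mult sums_of_real)
  then show ?thesis
    unfolding h2_inner_def polarization_identity by (rule sums_unique[symmetric])
qed

lemma h2_coeff_kernel: "h2_coeff (kernel \<alpha>) n = cnj \<alpha> ^ n"
proof -
  have "kernel \<alpha> has_fps_expansion Abs_fps (\<lambda>n. cnj \<alpha> ^ n)"
  proof (rule has_fps_expansionI)
    have "eventually (\<lambda>u. u \<in> ball 0 (1 / (norm \<alpha> + 1))) (nhds (0::complex))"
      by (intro eventually_nhds_in_open) (auto simp: add_nonneg_pos)
    then show "eventually (\<lambda>u. (\<lambda>n. fps_nth (Abs_fps (\<lambda>n. cnj \<alpha> ^ n)) n * u ^ n)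
        sums kernel \<alpha> u) (nhds 0)"
    proof eventually_elim
      case (elim u)
      have "0 < 1 + norm \<alpha>"
        by (simp add: add_pos_nonneg)
      with elim have "norm u + norm \<alpha> * norm u < 1"
        by (simp add: less_divide_eq add.commute algebra_simps)
      moreover have "0 \<le> norm \<alpha> * norm u"
        by simp
      ultimately have "norm \<alpha> * norm u < 1" "norm u < 1"
        using norm_ge_zero[of u] by linarith+
      then show ?case
        using geometric_sums[of "cnj \<alpha> * u"]
        by (simp add: kernel_def norm_mult power_mult_distrib)
    qed
  qed
  from fps_nth_fps_expansion[OF this, of n] show ?thesis
    by (simp add: h2_coeff_def)
qed

lemma kernel_in_H2:
  assumes "norm \<alpha> < 1"
  shows "kernel \<alpha> \<in> H2"
  unfolding H2_def
proof (intro CollectI conjI allI impI)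
  have "cnj \<alpha> * z \<noteq> 1" if "z \<in> ball 0 1" for z
  proof -
    have "norm (cnj \<alpha> * z) < 1"
      using mult_strict_mono'[of "norm \<alpha>" 1 "norm z" 1] assms that by (simp add: norm_mult)
    then show ?thesis
      by auto
  qed
  then have "(\<lambda>z. 1 / (1 - cnj \<alpha> * z)) holomorphic_on ball 0 1"
    by (auto intro!: holomorphic_intros)
  then show "kernel \<alpha> holomorphic_on ball 0 1"
    by (rule holomorphic_transform) (simp add: kernel_def)
  show "kernel \<alpha> z = 0" if "z \<notin> ball 0 1" for z
    using that by (simp add: kernel_def)
  have "summable (\<lambda>n. ((norm \<alpha>)\<^sup>2) ^ n)"
    using assms by (intro summable_geometric) (simp add: abs_square_less_1)
  then show "summable (\<lambda>n. (norm (h2_coeff (kernel \<alpha>) n))\<^sup>2)"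
    by (simp add: h2_coeff_kernel norm_power power_mult[symmetric] mult.commute)
qed

lemma h2_inner_kernel:
  assumes "f \<in> H2" "norm \<alpha> < 1"
  shows "h2_inner f (kernel \<alpha>) = f \<alpha>"
  using H2_sums[OF assms(1), of \<alpha>] assms(2)
  by (simp add: h2_inner_def h2_coeff_kernel sums_iff)

definition l2_inner :: "(real \<Rightarrow> complex) \<Rightarrow> (real \<Rightarrow> complex) \<Rightarrow> complex" where
  "l2_inner f g = (LINT x:{0..1}|lborel. f x * cnj (g x))"

lemma borel_measurable_cnj [measurable]:
  "f \<in> borel_measurable M \<Longrightarrow> (\<lambda>x. cnj (f x)) \<in> borel_measurable M"
  by (rule borel_measurable_continuous_on[of cnj]) (auto intro: continuous_intros)

lemma L2_measurable: "f \<in> L2 \<Longrightarrow> f \<in> borel_measurable borel"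
  and L2_set_integrable_square: "f \<in> L2 \<Longrightarrow> set_integrable lborel {0..1} (\<lambda>x. (norm (f x))\<^sup>2)"
  by (simp_all add: L2_def)

lemma L2_lincomb:
  assumes f: "f \<in> L2" and g: "g \<in> L2"
  shows "(\<lambda>x. f x + c * g x) \<in> L2"
proof -
  have [measurable]: "f \<in> borel_measurable borel" "g \<in> borel_measurable borel"
    using f g by (simp_all add: L2_measurable)
  have "set_integrable lborel {0..1} (\<lambda>x. 2 * (norm (f x))\<^sup>2 + 2 * (norm c)\<^sup>2 * (norm (g x))\<^sup>2)"
    using f g by (intro set_integral_add set_integrable_mult_right L2_set_integrable_square)
  then have "set_integrable lborel {0..1} (\<lambda>x. (norm (f x + c * g x))\<^sup>2)"
    by (rule set_integrable_bound)
       (auto simp: set_borel_measurable_def intro!: AE_I2 norm_lincomb_square_le)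
  then show ?thesis
    by (simp add: L2_def)
qed

lemma L2_bounded_mult:
  assumes f: "f \<in> L2" and [measurable]: "g \<in> borel_measurable borel"
    and bound: "\<And>x. x \<in> {0..1} \<Longrightarrow> norm (g x) \<le> B"
  shows "(\<lambda>x. g x * f x) \<in> L2"
proof -
  have [measurable]: "f \<in> borel_measurable borel"
    using f by (rule L2_measurable)
  have bound_square: "(norm (g x * f x))\<^sup>2 \<le> B\<^sup>2 * (norm (f x))\<^sup>2" if "x \<in> {0..1}" for x
  proof -
    have "(norm (g x))\<^sup>2 \<le> B\<^sup>2"
      using bound[OF that] by (intro power_mono) simp_all
    then show ?thesis
      unfolding norm_mult power_mult_distrib by (rule mult_right_mono) simp
  qed
  have "set_integrable lborel {0..1} (\<lambda>x. (norm (g x * f x))\<^sup>2)"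
  proof (rule set_integrable_bound[where f = "\<lambda>x. B\<^sup>2 * (norm (f x))\<^sup>2"])
    show "set_integrable lborel {0..1} (\<lambda>x. B\<^sup>2 * (norm (f x))\<^sup>2)"
      using L2_set_integrable_square[OF f] by simp
  qed (auto simp: set_borel_measurable_def bound_square intro!: AE_I2)
  then show ?thesis
    by (simp add: L2_def)
qed

lemma L2_continuous:
  assumes "continuous_on UNIV f"
  shows "f \<in> L2"
proof -
  have "continuous_on {0..1} (\<lambda>x. (norm (f x))\<^sup>2)"
    using continuous_on_subset[OF assms] by (intro continuous_intros) auto
  then show ?thesis
    using borel_measurable_continuous_onI[OF assms]
    by (simp add: L2_def borel_integrable_atLeastAtMost')
qed

lemma L2_monomial: "(\<lambda>x. complex_of_real x ^ n) \<in> L2"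
  by (intro L2_continuous continuous_intros)

lemma l2_inner_integrable:
  assumes f: "f \<in> L2" and g: "g \<in> L2"
  shows "set_integrable lborel {0..1} (\<lambda>x. f x * cnj (g x))"
proof -
  have [measurable]: "f \<in> borel_measurable borel" "g \<in> borel_measurable borel"
    using f g by (simp_all add: L2_measurable)
  have bound: "norm (f x) * norm (g x) \<le> (norm (f x))\<^sup>2 + (norm (g x))\<^sup>2" for x
    using sum_squares_bound[of "norm (f x)" "norm (g x)"]
      mult_nonneg_nonneg[OF norm_ge_zero norm_ge_zero, of "f x" "g x"]
    by linarith
  show ?thesis
  proof (rule set_integrable_bound[where f = "\<lambda>x. (norm (f x))\<^sup>2 + (norm (g x))\<^sup>2"])
    show "set_integrable lborel {0..1} (\<lambda>x. (norm (f x))\<^sup>2 + (norm (g x))\<^sup>2)"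
      using f g by (intro set_integral_add L2_set_integrable_square)
  qed (auto simp: set_borel_measurable_def norm_mult bound intro!: AE_I2)
qed

lemma l2_norm_square: "f \<in> L2 \<Longrightarrow> (l2_norm f)\<^sup>2 = (LINT x:{0..1}|lborel. (norm (f x))\<^sup>2)"
  unfolding l2_norm_def
  by (simp add: set_lebesgue_integral_def integral_nonneg_AE)

lemma l2_inner_polarization:
  assumes f: "f \<in> L2" and g: "g \<in> L2"
  shows "l2_inner f g = (\<Sum>k<4. \<i> ^ k * (l2_norm (\<lambda>x. f x + \<i> ^ k * g x))\<^sup>2) / 4"
proof -
  define q where "q k x = complex_of_real ((norm (f x + \<i> ^ k * g x))\<^sup>2)" for k x
  have "set_integrable lborel {0..1} (q k)" for k
    using L2_set_integrable_square[OF L2_lincomb[OF f g]] unfolding q_def set_integrable_def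
    by (simp add: complex_of_real_integrable_eq[symmetric] scaleR_conv_of_real del: of_real_power)
  then have "set_integrable lborel {0..1} (\<lambda>x. \<i> ^ k * q k x)" for k
    by (intro set_integrable_mult_right)
  then have "(LINT x:{0..1}|lborel. (\<Sum>k<4. \<i> ^ k * q k x)) =
      (\<Sum>k<4. LINT x:{0..1}|lborel. \<i> ^ k * q k x)"
    by (rule set_integral_sum)
  then have "l2_inner f g = (\<Sum>k<4. \<i> ^ k * (LINT x:{0..1}|lborel. q k x)) / 4"
    unfolding l2_inner_def polarization_identity q_def by simp
  moreover have "(LINT x:{0..1}|lborel. q k x) = (l2_norm (\<lambda>x. f x + \<i> ^ k * g x))\<^sup>2" for k
    unfolding q_def set_integral_complex_of_real l2_norm_square[OF L2_lincomb[OF f g]] ..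
  ultimately show ?thesis
    by simp
qed

lemma Pminus_in_L2: "f \<in> L2 \<Longrightarrow> Pminus s f \<in> L2"
  and Pplus_in_L2: "f \<in> L2 \<Longrightarrow> Pplus s f \<in> L2"
  unfolding Pminus_def Pplus_def by (rule L2_bounded_mult[where B = 1]; simp add: indicator_def)+

lemma l2_inner_Pplus_Pminus: "l2_inner (Pplus s f) (Pminus s g) = 0"
proof -
  have "AE x in lborel. indicator {0..1} x *\<^sub>R (Pplus s f x * cnj (Pminus s g x)) = 0"
    using AE_lborel_singleton[of s]
    by eventually_elim (auto simp: Pplus_def Pminus_def indicator_def)
  then show ?thesis
    unfolding l2_inner_def set_lebesgue_integral_def by (rule integral_eq_zero_AE)
qed

lemma l2_inner_Pminus_self:
  assumes "f \<in> L2"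
  shows "l2_inner f (Pminus s f) = (l2_norm (Pminus s f))\<^sup>2"
proof -
  have "f x * cnj (Pminus s f x) = complex_of_real ((norm (Pminus s f x))\<^sup>2)" for x
    by (simp add: Pminus_def indicator_def complex_norm_square del: of_real_power)
  then show ?thesis
    using assms by (simp add: l2_inner_def l2_norm_square Pminus_in_L2 set_integral_complex_of_real
        del: of_real_power)
qed

section \<open>Moments determine integrable functions on the unit interval\<close>

lemma set_integrable_bounded_mult:
  fixes u g :: "real \<Rightarrow> real"
  assumes u: "set_integrable lborel {0..1} u" and [measurable]: "u \<in> borel_measurable borel"
    and [measurable]: "g \<in> borel_measurable borel" and bound: "\<And>x. x \<in> {0..1} \<Longrightarrow> \<bar>g x\<bar> \<le> B"
  shows "set_integrable lborel {0..1} (\<lambda>x. g x * u x)"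
proof (rule set_integrable_bound[where f = "\<lambda>x. B * u x"])
  show "set_integrable lborel {0..1} (\<lambda>x. B * u x)"
    using u by simp
  have "\<bar>g x\<bar> * \<bar>u x\<bar> \<le> \<bar>B\<bar> * \<bar>u x\<bar>" if "x \<in> {0..1}" for x
    using bound[OF that] by (intro mult_right_mono) auto
  then show "AE x in lborel. x \<in> {0..1} \<longrightarrow> norm (g x * u x) \<le> norm (B * u x)"
    by (auto simp: abs_mult intro!: AE_I2)
qed (simp add: set_borel_measurable_def)

lemma set_integral_bounded_limit_eq_0:
  fixes u h :: "real \<Rightarrow> real" and g :: "nat \<Rightarrow> real \<Rightarrow> real"
  assumes u: "set_integrable lborel {0..1} u" and [measurable]: "u \<in> borel_measurable borel"
    and [measurable]: "\<And>k. g k \<in> borel_measurable borel" "h \<in> borel_measurable borel"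
    and bound: "\<And>k x. x \<in> {0..1} \<Longrightarrow> \<bar>g k x\<bar> \<le> B"
    and lim: "\<And>x. x \<in> {0..1} \<Longrightarrow> (\<lambda>k. g k x) \<longlonglongrightarrow> h x"
    and zero: "\<And>k. (LINT x:{0..1}|lborel. g k x * u x) = 0"
  shows "(LINT x:{0..1}|lborel. h x * u x) = 0"
proof -
  define v where "v x = indicator {0..1} x * u x" for x
  have "(\<lambda>k. LBINT x. g k x * v x) \<longlonglongrightarrow> (LBINT x. h x * v x)"
  proof (rule integral_dominated_convergence[where w = "\<lambda>x. B * \<bar>v x\<bar>"])
    show "integrable lborel (\<lambda>x. B * \<bar>v x\<bar>)"
      using u by (simp add: v_def set_integrable_def)
    show "AE x in lborel. (\<lambda>k. g k x * v x) \<longlonglongrightarrow> h x * v x"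
      by (intro AE_I2) (auto simp: v_def indicator_def intro!: tendsto_mult_right lim)
    show "AE x in lborel. norm (g k x * v x) \<le> B * \<bar>v x\<bar>" for k
      by (intro AE_I2) (auto simp: v_def indicator_def abs_mult bound mult_right_mono)
  qed (simp_all add: v_def)
  moreover have "(LBINT x. g k x * v x) = 0" for k
    using zero[of k] by (simp add: v_def set_lebesgue_integral_def mult_ac)
  ultimately have "(LBINT x. h x * v x) = 0"
    by (simp add: LIMSEQ_const_iff)
  then show ?thesis
    by (simp add: v_def set_lebesgue_integral_def mult_ac)
qed

lemma set_integral_polynomial_mult_eq_0:
  fixes u p :: "real \<Rightarrow> real"
  assumes u: "set_integrable lborel {0..1} u" "u \<in> borel_measurable borel"
    and moments: "\<And>n. (LINT x:{0..1}|lborel. x ^ n * u x) = 0"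
    and p: "real_polynomial_function p"
  shows "(LINT x:{0..1}|lborel. p x * u x) = 0"
proof -
  obtain a N where p_eq: "p = (\<lambda>x. \<Sum>i\<le>N. a i * x ^ i)"
    using real_polynomial_function_imp_sum[OF p] by blast
  have "set_integrable lborel {0..1} (\<lambda>x. a i * (x ^ i * u x))" for i
    by (intro set_integrable_mult_right set_integrable_bounded_mult[OF u, where B = 1])
      (auto simp: power_le_one)
  then show ?thesis
    by (simp add: p_eq sum_distrib_right mult.assoc set_integral_sum moments)
qed

lemma set_integral_continuous_mult_eq_0:
  fixes u g :: "real \<Rightarrow> real"
  assumes u: "set_integrable lborel {0..1} u" "u \<in> borel_measurable borel"
    and moments: "\<And>n. (LINT x:{0..1}|lborel. x ^ n * u x) = 0"
    and g: "continuous_on UNIV g"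
  shows "(LINT x:{0..1}|lborel. g x * u x) = 0"
proof -
  have "\<exists>p. real_polynomial_function p \<and> (\<forall>x\<in>{0..1}. \<bar>g x - p x\<bar> < inverse (real (Suc k)))" for k
    by (rule Stone_Weierstrass_real_polynomial_function[of "{0..1}" g "inverse (real (Suc k))"])
      (auto intro: continuous_on_subset[OF g])
  then obtain p where p: "\<And>k. real_polynomial_function (p k)"
    and approx: "\<And>k x. x \<in> {0..1} \<Longrightarrow> \<bar>g x - p k x\<bar> < inverse (real (Suc k))"
    by metis
  have "compact (g ` {0..1})"
    using g by (intro compact_continuous_image) (auto intro: continuous_on_subset)
  then obtain B where B: "\<And>x. x \<in> {0..1} \<Longrightarrow> \<bar>g x\<bar> \<le> B"
    by (meson compact_imp_bounded bounded_real image_eqI)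
  show ?thesis
  proof (rule set_integral_bounded_limit_eq_0[OF u, where g = p and B = "B + 1"])
    show "p k \<in> borel_measurable borel" for k
      using p by (intro borel_measurable_continuous_onI)
        (simp add: continuous_on_polymonial_function real_polynomial_function_eq)
    show "g \<in> borel_measurable borel"
      using g by (rule borel_measurable_continuous_onI)
    show "\<bar>p k x\<bar> \<le> B + 1" if "x \<in> {0..1}" for k x
      using B[OF that] approx[OF that, of k] inverse_le_1_iff[of "real (Suc k)"] by linarith
    show "(\<lambda>k. p k x) \<longlonglongrightarrow> g x" if "x \<in> {0..1}" for x
    proof -
      have "(\<lambda>k. g x - p k x) \<longlonglongrightarrow> 0"
        using approx[OF that] by (intro Lim_null_comparison[OF _ LIMSEQ_inverse_real_of_nat])
          (simp add: less_imp_le)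
      then have "(\<lambda>k. g x - (g x - p k x)) \<longlonglongrightarrow> g x - 0"
        by (intro tendsto_diff tendsto_const)
      then show ?thesis
        by simp
    qed
    show "(LINT x:{0..1}|lborel. p k x * u x) = 0" for k
      by (rule set_integral_polynomial_mult_eq_0[OF u moments p])
  qed
qed

lemma set_integral_tail_mult_eq_0:
  fixes u :: "real \<Rightarrow> real"
  assumes u: "set_integrable lborel {0..1} u" "u \<in> borel_measurable borel"
    and moments: "\<And>n. (LINT x:{0..1}|lborel. x ^ n * u x) = 0"
  shows "(LINT x:{0..1}|lborel. indicator {t<..} x * u x) = 0"
proof -
  define ramp where "ramp k x = min 1 (max 0 (real (Suc k) * (x - t)))" for k x
  have ramp_cont: "continuous_on UNIV (ramp k)" for k
    unfolding ramp_def by (intro continuous_intros)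
  show ?thesis
  proof (rule set_integral_bounded_limit_eq_0[OF u, where g = ramp and B = 1])
    show "ramp k \<in> borel_measurable borel" for k
      using ramp_cont by (rule borel_measurable_continuous_onI)
    show "\<bar>ramp k x\<bar> \<le> 1" for k x
      by (simp add: ramp_def)
    show "(LINT x:{0..1}|lborel. ramp k x * u x) = 0" for k
      by (rule set_integral_continuous_mult_eq_0[OF u moments ramp_cont])
    show "(\<lambda>k. ramp k x) \<longlonglongrightarrow> indicator {t<..} x" for x
    proof (cases "x \<le> t")
      case True
      then show ?thesis
        by (simp add: ramp_def mult_nonneg_nonpos)
    next
      case False
      obtain N :: nat where N: "inverse (x - t) < real N"
        using reals_Archimedean2 by blast
      have "ramp k x = 1" if "N \<le> k" for k
      proof -
        have "inverse (x - t) < real (Suc k)"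
          using N that by linarith
        then have "1 < real (Suc k) * (x - t)"
          using False by (simp add: field_simps)
        then show ?thesis
          by (simp add: ramp_def)
      qed
      then have "eventually (\<lambda>k. ramp k x = indicator {t<..} x) sequentially"
        using False by (auto simp: eventually_sequentially)
      then show ?thesis
        by (rule tendsto_eventually)
    qed
  qed simp
qed

text \<open>The densities of the positive and negative parts of \<open>v\<close> define finite measures that
  agree on all rays \<open>{t<..}\<close>, hence coincide.\<close>

lemma AE_eq_0_if_tail_integrals_eq_0:
  fixes v :: "real \<Rightarrow> real"
  assumes v: "integrable lborel v"
    and tails: "\<And>t. (LBINT x. indicator {t<..} x * v x) = 0"
  shows "AE x in lborel. v x = 0"
proof -
  define pos where "pos = (\<lambda>x. max 0 (v x))"
  define neg where "neg = (\<lambda>x. max 0 (- v x))"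
  have tail_measure:
    "emeasure (density lborel w) {t<..} = ennreal (LBINT x. indicator {t<..} x * w x)"
    if "integrable lborel w" "\<And>x. 0 \<le> w x" for w :: "real \<Rightarrow> real" and t
  proof -
    have "emeasure (density lborel w) {t<..} = (\<integral>\<^sup>+ x. ennreal (indicator {t<..} x * w x) \<partial>lborel)"
      using that by (subst emeasure_density) (auto intro!: nn_integral_cong split: split_indicator)
    also have "\<dots> = ennreal (LBINT x. indicator {t<..} x * w x)"
      using that integrable_mult_indicator[of "{t<..}" lborel w]
      by (intro nn_integral_eq_integral) auto
    finally show ?thesis .
  qed
  have pos_int: "integrable lborel pos" and neg_int: "integrable lborel neg"
    using v by (simp_all add: pos_def neg_def)
  have "(LBINT x. indicator {t<..} x * pos x) = (LBINT x. indicator {t<..} x * neg x)" for t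
  proof -
    have "(LBINT x. indicator {t<..} x * v x) =
        (LBINT x. indicator {t<..} x * pos x - indicator {t<..} x * neg x)"
      by (intro Bochner_Integration.integral_cong)
        (auto simp: pos_def neg_def max_def split: split_indicator)
    also have "\<dots> = (LBINT x. indicator {t<..} x * pos x) - (LBINT x. indicator {t<..} x * neg x)"
      using integrable_mult_indicator[of "{t<..}" lborel pos]
        integrable_mult_indicator[of "{t<..}" lborel neg] pos_int neg_int
      by (intro Bochner_Integration.integral_diff) auto
    finally show ?thesis
      using tails[of t] by simp
  qed
  then have "density lborel pos = density lborel neg"
    using pos_int neg_int
    by (intro measure_eqI_lessThan) (auto simp: tail_measure pos_def neg_def)
  then have "AE x in lborel. ennreal (pos x) = ennreal (neg x)"
    using v by (intro sigma_finite_measure.density_unique[OF sigma_finite_lborel])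
      (auto simp: pos_def neg_def)
  then show ?thesis
    by eventually_elim (simp add: pos_def neg_def ennreal_inj split: if_splits)
qed

lemma AE_eq_0_if_moments_eq_0_real:
  fixes u :: "real \<Rightarrow> real"
  assumes u: "set_integrable lborel {0..1} u" "u \<in> borel_measurable borel"
    and moments: "\<And>n. (LINT x:{0..1}|lborel. x ^ n * u x) = 0"
  shows "AE x\<in>{0..1} in lborel. u x = 0"
proof -
  have "AE x in lborel. indicator {0..1} x * u x = 0"
  proof (rule AE_eq_0_if_tail_integrals_eq_0)
    show "integrable lborel (\<lambda>x. indicator {0..1} x * u x)"
      using u by (simp add: set_integrable_def)
    show "(LBINT x. indicator {t<..} x * (indicator {0..1} x * u x)) = 0" for t
      using set_integral_tail_mult_eq_0[OF u moments, of t]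
      by (simp add: set_lebesgue_integral_def mult_ac)
  qed
  then show ?thesis
    by eventually_elim (simp add: indicator_def)
qed

lemma AE_eq_0_if_moments_eq_0:
  fixes e :: "real \<Rightarrow> complex"
  assumes e: "set_integrable lborel {0..1} e" and [measurable]: "e \<in> borel_measurable borel"
    and moments: "\<And>n. (LINT x:{0..1}|lborel. x ^ n *\<^sub>R e x) = 0"
  shows "AE x\<in>{0..1} in lborel. e x = 0"
proof -
  have moment_int: "set_integrable lborel {0..1} (\<lambda>x. x ^ n *\<^sub>R e x)" for n
    by (rule set_integrable_bound[OF e])
      (auto simp: set_borel_measurable_def intro!: AE_I2 mult_left_le_one_le power_le_one)
  have "(LINT x:{0..1}|lborel. x ^ n * Re (e x)) = Re (LINT x:{0..1}|lborel. x ^ n *\<^sub>R e x)"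
    "(LINT x:{0..1}|lborel. x ^ n * Im (e x)) = Im (LINT x:{0..1}|lborel. x ^ n *\<^sub>R e x)" for n
    using integral_Re[OF moment_int[unfolded set_integrable_def]]
      integral_Im[OF moment_int[unfolded set_integrable_def]]
    unfolding set_lebesgue_integral_def by (simp_all add: mult_ac)
  then have "(LINT x:{0..1}|lborel. x ^ n * Re (e x)) = 0"
    "(LINT x:{0..1}|lborel. x ^ n * Im (e x)) = 0" for n
    by (simp_all add: moments)
  moreover have "set_integrable lborel {0..1} (\<lambda>x. Re (e x))"
    "set_integrable lborel {0..1} (\<lambda>x. Im (e x))"
    using integrable_Re[OF e[unfolded set_integrable_def]]
      integrable_Im[OF e[unfolded set_integrable_def]]
    by (simp_all add: set_integrable_def)
  ultimately have "AE x\<in>{0..1} in lborel. Re (e x) = 0" "AE x\<in>{0..1} in lborel. Im (e x) = 0"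
    by (intro AE_eq_0_if_moments_eq_0_real; simp)+
  then show ?thesis
    by eventually_elim (simp add: complex_eq_iff)
qed

lemma set_integral_monomial_powr:
  fixes \<gamma> :: real
  assumes "0 < \<gamma>"
  shows "(LINT x:{0..1}|lborel. x ^ n * x powr \<gamma>) = 1 / (real n + \<gamma> + 1)"
proof -
  have "(LINT x:{0..1}|lborel. x ^ n * x powr \<gamma>) = (LINT x:{0..1}|lborel. x powr (real n + \<gamma>))"
  proof (intro set_lebesgue_integral_cong allI impI)
    show "x ^ n * x powr \<gamma> = x powr (real n + \<gamma>)" if "x \<in> {0..1}" for x
      using assms that by (cases "x = 0") (auto simp: powr_add powr_realpow)
  qed auto
  also have "\<dots> = integral {0..1} (\<lambda>x. x powr (real n + \<gamma>))"
    using assms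
    by (intro set_borel_integral_eq_integral borel_integrable_atLeastAtMost' continuous_on_powr')
      (auto intro: continuous_intros)
  also have "\<dots> = 1 / (real n + \<gamma> + 1)"
    using has_integral_powr_from_0[of "real n + \<gamma>" 1] assms by (simp add: integral_unique)
  finally show ?thesis .
qed

section \<open>Compression into \<open>[0, s]\<close>\<close>

lemma set_integral_unit_interval_scale:
  fixes F G :: "real \<Rightarrow> 'a::{banach, second_countable_topology}"
  assumes c: "0 < c" and FG: "\<And>y. y \<in> {0..1} \<Longrightarrow> F (c * y) = G y"
  shows set_integrable_unit_interval_scale_iff:
      "set_integrable lborel {0..c} F \<longleftrightarrow> set_integrable lborel {0..1} G"
    and "(LINT x:{0..c}|lborel. F x) = c *\<^sub>R (LINT y:{0..1}|lborel. G y)"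
proof -
  have "indicator {0..c} (c * y) *\<^sub>R F (c * y) = indicator {0..1} y *\<^sub>R G y" for y
    using c FG[of y] by (auto simp: indicator_def zero_le_mult_iff mult_le_cancel_left1)
  then have eq: "(\<lambda>y. indicator {0..c} (0 + c * y) *\<^sub>R F (0 + c * y)) =
      (\<lambda>y. indicator {0..1} y *\<^sub>R G y)"
    by simp
  show "set_integrable lborel {0..c} F \<longleftrightarrow> set_integrable lborel {0..1} G"
    using lborel_integrable_real_affine_iff[of c "\<lambda>x. indicator {0..c} x *\<^sub>R F x" 0] c
    unfolding set_integrable_def eq by simp
  show "(LINT x:{0..c}|lborel. F x) = c *\<^sub>R (LINT y:{0..1}|lborel. G y)"
    using lborel_integral_real_affine[of c "\<lambda>x. indicator {0..c} x *\<^sub>R F x" 0] c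
    unfolding set_lebesgue_integral_def eq by simp
qed

lemma set_integral_unit_interval_eq_initial:
  fixes F :: "real \<Rightarrow> 'a::{banach, second_countable_topology}"
  assumes "s \<le> 1" and vanish: "\<And>x. s < x \<Longrightarrow> x \<le> 1 \<Longrightarrow> F x = 0"
  shows "set_integrable lborel {0..1} F \<longleftrightarrow> set_integrable lborel {0..s} F"
    and "(LINT x:{0..1}|lborel. F x) = (LINT x:{0..s}|lborel. F x)"
proof -
  have "(\<lambda>x. indicator {0..1} x *\<^sub>R F x) = (\<lambda>x. indicator {0..s} x *\<^sub>R F x)"
    using assms by (auto simp: indicator_def fun_eq_iff)
  then show "set_integrable lborel {0..1} F \<longleftrightarrow> set_integrable lborel {0..s} F"
    and "(LINT x:{0..1}|lborel. F x) = (LINT x:{0..s}|lborel. F x)"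
    by (simp_all add: set_integrable_def set_lebesgue_integral_def)
qed

definition compress :: "real \<Rightarrow> (real \<Rightarrow> complex) \<Rightarrow> real \<Rightarrow> complex" where
  "compress s f x = indicator {0..s} x * f (x / s) / of_real (sqrt s)"

definition stretch :: "real \<Rightarrow> (real \<Rightarrow> complex) \<Rightarrow> real \<Rightarrow> complex" where
  "stretch s g y = of_real (sqrt s) * g (s * y)"

lemma compress_stretch: "0 < s \<Longrightarrow> compress s (stretch s g) = Pminus s g"
  by (auto simp: fun_eq_iff compress_def stretch_def Pminus_def)

lemma Pminus_compress: "Pminus s (compress s f) = compress s f"
  by (auto simp: fun_eq_iff compress_def Pminus_def indicator_def)

lemma compress_scale:
  assumes "0 < s" "y \<in> {0..1}"
  shows "compress s f (s * y) = f y / of_real (sqrt s)"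
  using assms by (simp add: compress_def indicator_def mult_le_cancel_left1)

lemma compress_in_L2:
  assumes s: "0 < s" "s \<le> 1" and f: "f \<in> L2"
  shows "compress s f \<in> L2"
proof -
  have [measurable]: "f \<in> borel_measurable borel"
    using f by (rule L2_measurable)
  have "set_integrable lborel {0..s} (\<lambda>x. (norm (compress s f x))\<^sup>2) \<longleftrightarrow>
      set_integrable lborel {0..1} (\<lambda>y. (norm (f y))\<^sup>2 / s)"
    using s by (intro set_integrable_unit_interval_scale_iff)
      (auto simp: compress_scale norm_divide power_divide)
  then have "set_integrable lborel {0..s} (\<lambda>x. (norm (compress s f x))\<^sup>2)"
    using L2_set_integrable_square[OF f] by simp
  then have "set_integrable lborel {0..1} (\<lambda>x. (norm (compress s f x))\<^sup>2)"
    using s by (subst set_integral_unit_interval_eq_initial) (auto simp: compress_def)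
  then show ?thesis
    unfolding L2_def compress_def by auto
qed

lemma stretch_in_L2:
  assumes s: "0 < s" "s \<le> 1" and g: "g \<in> L2"
  shows "stretch s g \<in> L2"
proof -
  have [measurable]: "g \<in> borel_measurable borel"
    using g by (rule L2_measurable)
  have "set_integrable lborel {0..s} (\<lambda>x. (norm (g x))\<^sup>2)"
    using s by (intro set_integrable_subset[OF L2_set_integrable_square[OF g]]) auto
  moreover have "set_integrable lborel {0..s} (\<lambda>x. (norm (g x))\<^sup>2) \<longleftrightarrow>
      set_integrable lborel {0..1} (\<lambda>y. (norm (g (s * y)))\<^sup>2)"
    using s by (intro set_integrable_unit_interval_scale_iff) auto
  ultimately have "set_integrable lborel {0..1} (\<lambda>y. (norm (g (s * y)))\<^sup>2)"
    by simp
  then have "set_integrable lborel {0..1} (\<lambda>y. (norm (stretch s g y))\<^sup>2)"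
    using s by (simp add: stretch_def norm_mult power_mult_distrib)
  then show ?thesis
    unfolding L2_def stretch_def by auto
qed

lemma set_integral_compress_powr:
  assumes s: "0 < s" "s \<le> 1"
  shows "(LINT x:{0..1}|lborel. compress s f x * of_real ((\<gamma> + 1) * x powr \<gamma>))
       = of_real (s powr (\<gamma> + 1 / 2)) * (LINT y:{0..1}|lborel. f y * of_real ((\<gamma> + 1) * y powr \<gamma>))"
proof -
  have "s * (s powr \<gamma> / sqrt s) = s powr 1 * s powr \<gamma> / s powr (1 / 2)"
    using s by (simp add: powr_half_sqrt)
  also have "\<dots> = s powr (1 + \<gamma> - 1 / 2)"
    by (simp only: powr_add powr_diff)
  also have "1 + \<gamma> - 1 / 2 = \<gamma> + 1 / 2"
    by simp
  finally have exponent: "s * (s powr \<gamma> / sqrt s) = s powr (\<gamma> + 1 / 2)" .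
  have scaled: "compress s f (s * y) * of_real ((\<gamma> + 1) * (s * y) powr \<gamma>) =
      of_real (s powr \<gamma> / sqrt s) * (f y * of_real ((\<gamma> + 1) * y powr \<gamma>))" if "y \<in> {0..1}" for y
    using s that unfolding compress_scale[OF s(1) that] by (simp add: powr_mult field_simps)
  have "(LINT x:{0..1}|lborel. compress s f x * of_real ((\<gamma> + 1) * x powr \<gamma>)) =
      (LINT x:{0..s}|lborel. compress s f x * of_real ((\<gamma> + 1) * x powr \<gamma>))"
    using s by (intro set_integral_unit_interval_eq_initial(2)) (auto simp: compress_def)
  also have "\<dots> = s *\<^sub>R (LINT y:{0..1}|lborel.
      of_real (s powr \<gamma> / sqrt s) * (f y * of_real ((\<gamma> + 1) * y powr \<gamma>)))"
    using s scaled by (intro set_integral_unit_interval_scale(2))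
  also have "\<dots> =
      of_real (s powr (\<gamma> + 1 / 2)) * (LINT y:{0..1}|lborel. f y * of_real ((\<gamma> + 1) * y powr \<gamma>))"
    by (simp add: scaleR_conv_of_real flip: exponent)
  finally show ?thesis .
qed

lemma holomorphic_on_ball_eq_if_eq_on_unit_interval:
  assumes f: "f holomorphic_on ball 0 1" and g: "g holomorphic_on ball 0 1"
    and eq: "\<And>r. 0 < r \<Longrightarrow> r < 1 \<Longrightarrow> f (of_real r) = g (of_real r)"
    and z: "z \<in> ball 0 1"
  shows "f z = g z"
proof -
  define r where "r n = 1 / 2 + inverse (real (Suc n)) / 4" for n
  have r: "0 < r n" "r n < 1" "r n \<noteq> 1 / 2" for n
  proof -
    have "0 < inverse (real (Suc n))" "inverse (real (Suc n)) \<le> 1"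
      by (simp_all add: inverse_le_1_iff)
    then have "1 / 2 < r n" "r n < 1"
      unfolding r_def by linarith+
    then show "0 < r n" "r n < 1" "r n \<noteq> 1 / 2"
      by simp_all
  qed
  have "r \<longlonglongrightarrow> 1 / 2 + 0 / 4"
    unfolding r_def by (intro tendsto_intros LIMSEQ_inverse_real_of_nat) simp
  then have lim: "(\<lambda>n. complex_of_real (r n)) \<longlonglongrightarrow> complex_of_real (1 / 2)"
    by (intro tendsto_of_real) simp
  have mem: "complex_of_real (r n) \<in> complex_of_real ` {0<..<1} - {complex_of_real (1 / 2)}" for n
  proof
    show "complex_of_real (r n) \<in> complex_of_real ` {0<..<1}"
      using r by (intro imageI) simp
    have "complex_of_real (r n) \<noteq> complex_of_real (1 / 2)"
      unfolding of_real_eq_iff by (rule r(3))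
    then show "complex_of_real (r n) \<notin> {complex_of_real (1 / 2)}"
      by blast
  qed
  have limpt: "complex_of_real (1 / 2) islimpt (complex_of_real ` {0<..<1})"
    unfolding islimpt_sequential by (intro exI[of _ "\<lambda>n. complex_of_real (r n)"] conjI allI mem lim)
  have "(\<lambda>z. f z - g z) holomorphic_on ball 0 1"
    using f g by (intro holomorphic_intros)
  then have "f z - g z = 0"
  proof (rule analytic_continuation[OF _ open_ball connected_ball _ _ limpt _ z])
    show "complex_of_real ` {0<..<1} \<subseteq> ball 0 1" "complex_of_real (1 / 2) \<in> ball 0 1"
      by auto
    show "f w - g w = 0" if "w \<in> complex_of_real ` {0<..<1}" for w
      using that eq by auto
  qed
  then show ?thesis
    by simp
qed

lemma Phi_holomorphic: "Phi s holomorphic_on ball 0 1"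
proof -
  have "1 - z \<noteq> 0" if "z \<in> ball 0 1" for z :: complex
    using that by auto
  then show ?thesis
    unfolding Phi_def[abs_def] by (auto intro!: holomorphic_intros)
qed

lemma Phi_of_real:
  assumes "0 < s" "0 < r" "r < 1"
  shows "Phi s (of_real r) = of_real (s powr (r / (1 - r) + 1 / 2))"
proof -
  have "Phi s (of_real r) = of_real (exp (ln s / 2 * ((1 + r) / (1 - r))))"
    by (simp add: Phi_def flip: exp_of_real)
  also have "ln s / 2 * ((1 + r) / (1 - r)) = (r / (1 - r) + 1 / 2) * ln s"
    using assms by (simp add: field_simps)
  finally show ?thesis
    using assms by (simp add: powr_def)
qed

section \<open>The Sarason transform\<close>

locale sarason =
  fixes U :: "(real \<Rightarrow> complex) \<Rightarrow> (complex \<Rightarrow> complex)"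
  assumes sarason_transform: "sarason_transform U"
begin

lemma U_in_H2: "f \<in> L2 \<Longrightarrow> U f \<in> H2"
  using sarason_transform by (auto simp: sarason_transform_def)

lemma U_surj:
  assumes "h \<in> H2"
  obtains f where "f \<in> L2" "h = U f"
proof -
  have "h \<in> U ` L2"
    using sarason_transform assms by (simp add: sarason_transform_def)
  then show thesis
    using that by blast
qed

lemma h2_norm_U: "f \<in> L2 \<Longrightarrow> h2_norm (U f) = l2_norm f"
  using sarason_transform by (simp add: sarason_transform_def)

lemma U_monomial:
  "U (\<lambda>x. complex_of_real x ^ n) =
    (\<lambda>z. 1 / of_nat (n + 1) * kernel (of_real (real n / real (n + 1))) z)"
  using sarason_transform by (simp add: sarason_transform_def)

lemma U_lincomb:
  assumes f: "f \<in> L2" and g: "g \<in> L2"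
  shows "U (\<lambda>x. f x + c * g x) = (\<lambda>z. U f z + c * U g z)"
proof -
  have "(\<lambda>x. c * g x) \<in> L2"
    using L2_bounded_mult[OF g, of "\<lambda>x. c" "norm c"] by simp
  then show ?thesis
    using sarason_transform f g by (simp add: sarason_transform_def)
qed

lemma h2_inner_U:
  assumes f: "f \<in> L2" and g: "g \<in> L2"
  shows "h2_inner (U f) (U g) = l2_inner f g"
  using f g
  by (simp add: h2_inner_polarization l2_inner_polarization U_in_H2 h2_norm_U L2_lincomb
      flip: U_lincomb)

lemma U_cong_AE:
  assumes f: "f \<in> L2" and g: "g \<in> L2" and eq: "AE x\<in>{0..1} in lborel. f x = g x"
  shows "U f = U g"
proof -
  define d where "d = (\<lambda>x. f x + (-1) * g x)"
  have d: "d \<in> L2"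
    unfolding d_def using f g by (rule L2_lincomb)
  have "(LINT x:{0..1}|lborel. (norm (d x))\<^sup>2) = 0"
    unfolding set_lebesgue_integral_def
    by (rule integral_eq_zero_AE) (use eq in \<open>eventually_elim, simp add: d_def indicator_def\<close>)
  then have "h2_norm (U d) = 0"
    using d by (simp add: h2_norm_U l2_norm_def)
  then have "U d = (\<lambda>z. 0)"
    using d by (intro h2_norm_eq_0_imp_zero U_in_H2)
  then show ?thesis
    using U_lincomb[OF f g, of "-1"] by (simp add: d_def fun_eq_iff)
qed

lemma U_monomial_at_real:
  assumes \<gamma>: "0 < \<gamma>"
  shows "U (\<lambda>x. complex_of_real x ^ n) (of_real (\<gamma> / (\<gamma> + 1))) = (\<gamma> + 1) / (real n + \<gamma> + 1)"
proof -
  have "norm (complex_of_real (\<gamma> / (\<gamma> + 1))) < 1"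
    unfolding norm_of_real using \<gamma> by simp
  then have "U (\<lambda>x. complex_of_real x ^ n) (of_real (\<gamma> / (\<gamma> + 1))) =
      complex_of_real (1 / real (n + 1) / (1 - real n / real (n + 1) * (\<gamma> / (\<gamma> + 1))))"
    by (simp add: U_monomial kernel_def)
  also have "1 - real n / real (n + 1) * (\<gamma> / (\<gamma> + 1)) =
      (real n + \<gamma> + 1) / (real (n + 1) * (\<gamma> + 1))"
    using \<gamma> mult_pos_pos[of "real n + 1" "\<gamma> + 1"] by (simp add: field_simps)
  also have "1 / real (n + 1) / ((real n + \<gamma> + 1) / (real (n + 1) * (\<gamma> + 1))) =
      (\<gamma> + 1) / (real n + \<gamma> + 1)"
    using \<gamma> mult_pos_pos[of "real n + 1" "real n + \<gamma> + 1"] by (simp add: field_simps)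
  finally show ?thesis .
qed

text \<open>The element of \<open>L2\<close> representing evaluation at \<open>\<gamma> / (\<gamma> + 1)\<close> is
  \<open>(\<gamma> + 1) x powr \<gamma>\<close>: both have the moments \<open>(\<gamma> + 1) / (n + \<gamma> + 1)\<close>.\<close>

lemma U_eval_real:
  assumes f: "f \<in> L2" and \<gamma>: "0 < \<gamma>"
  shows "U f (of_real (\<gamma> / (\<gamma> + 1))) = (LINT x:{0..1}|lborel. f x * of_real ((\<gamma> + 1) * x powr \<gamma>))"
proof -
  define \<alpha> where "\<alpha> = complex_of_real (\<gamma> / (\<gamma> + 1))"
  define q where "q = (\<lambda>x. complex_of_real ((\<gamma> + 1) * x powr \<gamma>))"
  have \<alpha>: "norm \<alpha> < 1"
    unfolding \<alpha>_def norm_of_real using \<gamma> by simp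
  obtain e where e: "e \<in> L2" and kernel_eq: "kernel \<alpha> = U e"
    using U_surj[OF kernel_in_H2[OF \<alpha>]] by blast
  have U_eval: "U h \<alpha> = l2_inner h e" if "h \<in> L2" for h
    using h2_inner_kernel[OF U_in_H2[OF that] \<alpha>] h2_inner_U[OF that e] by (simp add: kernel_eq)
  have [measurable]:
    "f \<in> borel_measurable borel" "e \<in> borel_measurable borel" "q \<in> borel_measurable borel"
    using f e by (simp_all add: L2_measurable q_def)
  have q_cont: "continuous_on {0..1} q"
    unfolding q_def using \<gamma> by (intro continuous_intros continuous_on_powr') auto
  have "(LINT x:{0..1}|lborel. x ^ n *\<^sub>R cnj (e x)) = (\<gamma> + 1) / (real n + \<gamma> + 1)" for n
    using U_eval[OF L2_monomial] U_monomial_at_real[OF \<gamma>]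
    by (simp add: \<alpha>_def l2_inner_def scaleR_conv_of_real)
  moreover have "(LINT x:{0..1}|lborel. x ^ n *\<^sub>R q x) = (\<gamma> + 1) / (real n + \<gamma> + 1)" for n
  proof -
    have "(LINT x:{0..1}|lborel. x ^ n *\<^sub>R q x) =
        (LINT x:{0..1}|lborel. complex_of_real ((\<gamma> + 1) * (x ^ n * x powr \<gamma>)))"
      by (simp add: q_def scaleR_conv_of_real mult_ac)
    also have "\<dots> = complex_of_real ((\<gamma> + 1) * (1 / (real n + \<gamma> + 1)))"
      unfolding set_integral_complex_of_real using set_integral_monomial_powr[OF \<gamma>] by simp
    finally show ?thesis
      by simp
  qed
  moreover have "set_integrable lborel {0..1} (\<lambda>x. x ^ n *\<^sub>R q x)" for n
    using q_cont by (intro borel_integrable_atLeastAtMost' continuous_intros)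
  moreover have cnj_e_int: "set_integrable lborel {0..1} (\<lambda>x. x ^ n *\<^sub>R cnj (e x))" for n
    using l2_inner_integrable[OF L2_monomial e] by (simp add: scaleR_conv_of_real)
  ultimately have "(LINT x:{0..1}|lborel. x ^ n *\<^sub>R (cnj (e x) - q x)) = 0" for n
    by (simp add: scaleR_diff_right set_integral_diff)
  then have "AE x\<in>{0..1} in lborel. cnj (e x) - q x = 0"
    using cnj_e_int[of 0] borel_integrable_atLeastAtMost'[OF q_cont]
    by (intro AE_eq_0_if_moments_eq_0) auto
  then have "AE x\<in>{0..1} in lborel. f x * cnj (e x) = f x * q x"
    by eventually_elim simp
  then have "l2_inner f e = (LINT x:{0..1}|lborel. f x * q x)"
    unfolding l2_inner_def by (intro set_lebesgue_integral_cong_AE) simp_all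
  then show ?thesis
    using U_eval[OF f] by (simp add: \<alpha>_def q_def)
qed

lemma U_compress:
  assumes s: "0 < s" "s \<le> 1" and f: "f \<in> L2"
  shows "U (compress s f) = (\<lambda>z. Phi s z * U f z)"
proof
  fix z
  have cf: "compress s f \<in> L2"
    using s f by (rule compress_in_L2)
  show "U (compress s f) z = Phi s z * U f z"
  proof (cases "z \<in> ball 0 1")
    case True
    show ?thesis
    proof (rule holomorphic_on_ball_eq_if_eq_on_unit_interval[OF _ _ _ True])
      show "U (compress s f) holomorphic_on ball 0 1"
        using cf by (intro H2_holomorphic U_in_H2)
      show "(\<lambda>z. Phi s z * U f z) holomorphic_on ball 0 1"
        using Phi_holomorphic H2_holomorphic[OF U_in_H2[OF f]] by (intro holomorphic_intros)
      fix r :: real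
      assume r: "0 < r" "r < 1"
      define \<gamma> where "\<gamma> = r / (1 - r)"
      have \<gamma>: "0 < \<gamma>" and r_eq: "\<gamma> / (\<gamma> + 1) = r"
        using r by (simp_all add: \<gamma>_def field_simps)
      show "U (compress s f) (of_real r) = Phi s (of_real r) * U f (of_real r)"
        using U_eval_real[OF cf \<gamma>] U_eval_real[OF f \<gamma>] set_integral_compress_powr[OF s, of f \<gamma>]
          Phi_of_real[OF s(1) r, folded \<gamma>_def]
        unfolding r_eq by simp
    qed
  next
    case False
    then show ?thesis
      using cf f by (simp add: H2_outside U_in_H2)
  qed
qed

lemma U_Pminus_range:
  assumes s: "0 < s" "s \<le> 1"
  shows "U ` (Pminus s ` L2) = {h. \<exists>g\<in>H2. h = (\<lambda>z. Phi s z * g z)}"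
proof (intro equalityI subsetI)
  fix h
  assume "h \<in> U ` (Pminus s ` L2)"
  then obtain g where g: "g \<in> L2" and h: "h = U (Pminus s g)"
    by auto
  have "h = U (compress s (stretch s g))"
    using s by (simp add: h compress_stretch)
  also have "\<dots> = (\<lambda>z. Phi s z * U (stretch s g) z)"
    using s stretch_in_L2[OF s g] by (rule U_compress)
  finally show "h \<in> {h. \<exists>g\<in>H2. h = (\<lambda>z. Phi s z * g z)}"
    using U_in_H2[OF stretch_in_L2[OF s g]] by blast
next
  fix h
  assume "h \<in> {h. \<exists>g\<in>H2. h = (\<lambda>z. Phi s z * g z)}"
  then obtain g where g: "g \<in> H2" and h: "h = (\<lambda>z. Phi s z * g z)"
    by auto
  obtain f where f: "f \<in> L2" and g_eq: "g = U f"
    using U_surj[OF g] by blast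
  have "h = U (Pminus s (compress s f))"
    by (simp add: h g_eq U_compress[OF s f] Pminus_compress)
  then show "h \<in> U ` (Pminus s ` L2)"
    using compress_in_L2[OF s f] by blast
qed

lemma U_eq_U_Pplus_if_orthogonal:
  assumes a: "a \<in> L2" and orth: "h2_inner (U a) (U (Pminus s a)) = 0"
  shows "U a = U (Pplus s a)"
proof -
  have "l2_inner a (Pminus s a) = 0"
    using orth a by (simp add: h2_inner_U Pminus_in_L2)
  then have "h2_norm (U (Pminus s a)) = 0"
    using a l2_inner_Pminus_self[OF a, of s] by (simp add: h2_norm_U Pminus_in_L2)
  then have U_Pminus: "U (Pminus s a) = (\<lambda>z. 0)"
    using a by (intro h2_norm_eq_0_imp_zero U_in_H2 Pminus_in_L2)
  have "AE x\<in>{0..1} in lborel. a x = Pplus s a x + 1 * Pminus s a x"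
    using AE_lborel_singleton[of s]
    by eventually_elim (auto simp: Pplus_def Pminus_def indicator_def)
  then have "U a = U (\<lambda>x. Pplus s a x + 1 * Pminus s a x)"
    using a by (intro U_cong_AE L2_lincomb Pplus_in_L2 Pminus_in_L2)
  also have "\<dots> = (\<lambda>z. U (Pplus s a) z + 1 * U (Pminus s a) z)"
    using a by (intro U_lincomb Pplus_in_L2 Pminus_in_L2)
  also have "\<dots> = U (Pplus s a)"
    by (simp add: U_Pminus)
  finally show ?thesis .
qed

lemma U_Pplus_range:
  assumes s: "0 < s" "s \<le> 1"
  shows "U ` (Pplus s ` L2) = {h \<in> H2. \<forall>g\<in>H2. h2_inner h (\<lambda>z. Phi s z * g z) = 0}"
proof (intro equalityI subsetI)
  fix h
  assume "h \<in> U ` (Pplus s ` L2)"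
  then obtain a where a: "a \<in> L2" and h: "h = U (Pplus s a)"
    by auto
  have "h2_inner h (\<lambda>z. Phi s z * g z) = 0" if "g \<in> H2" for g
  proof -
    have "(\<lambda>z. Phi s z * g z) \<in> U ` (Pminus s ` L2)"
      unfolding U_Pminus_range[OF s] using that by blast
    then obtain b where b: "b \<in> L2" and "(\<lambda>z. Phi s z * g z) = U (Pminus s b)"
      by blast
    then show ?thesis
      using a by (simp add: h h2_inner_U Pplus_in_L2 Pminus_in_L2 l2_inner_Pplus_Pminus)
  qed
  then show "h \<in> {h \<in> H2. \<forall>g\<in>H2. h2_inner h (\<lambda>z. Phi s z * g z) = 0}"
    using a by (simp add: h U_in_H2 Pplus_in_L2)
next
  fix h
  assume "h \<in> {h \<in> H2. \<forall>g\<in>H2. h2_inner h (\<lambda>z. Phi s z * g z) = 0}"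
  then have h: "h \<in> H2" and orth: "\<And>g. g \<in> H2 \<Longrightarrow> h2_inner h (\<lambda>z. Phi s z * g z) = 0"
    by auto
  obtain a where a: "a \<in> L2" and h_eq: "h = U a"
    using U_surj[OF h] by blast
  have "U (Pminus s a) \<in> {h. \<exists>g\<in>H2. h = (\<lambda>z. Phi s z * g z)}"
    unfolding U_Pminus_range[OF s, symmetric] using a by blast
  then obtain g where "g \<in> H2" "U (Pminus s a) = (\<lambda>z. Phi s z * g z)"
    by blast
  then have "h2_inner (U a) (U (Pminus s a)) = 0"
    using orth h_eq by simp
  then have "U a = U (Pplus s a)"
    by (rule U_eq_U_Pplus_if_orthogonal[OF a])
  then show "h \<in> U ` (Pplus s ` L2)"
    using a h_eq by blast
qed

end

theorem lemma2p11:
  fixes U :: "(real \<Rightarrow> complex) \<Rightarrow> (complex \<Rightarrow> complex)" and s :: real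
  assumes "sarason_transform U" and "0 < s" and "s \<le> 1"
  shows "U ` (Pminus s ` L2) = {h. \<exists>g\<in>H2. h = (\<lambda>z. Phi s z * g z)} \<and>
         U ` (Pplus s ` L2) =
           {h \<in> H2. \<forall>g\<in>H2. h2_inner h (\<lambda>z. Phi s z * g z) = 0}"
proof -
  interpret sarason U
    using assms(1) by unfold_locales
  show ?thesis
    using U_Pminus_range[OF assms(2,3)] U_Pplus_range[OF assms(2,3)] by blast
qed

end
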